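(* Let $n\ge 2$ and $b\ge 2$ be integers and $r\ge 0$. The probability that the base-$b$ carries chain for adding $n$ numbers, started at $\kappa_0=0$, is in state $j$ after $r$ steps equals the probability that a random permutation of $S_n$ with law $Q_{b^r}$ (the law of the permutation obtained by performing $r$ successive independent $b$-shuffles starting from the identity) has exactly $j$ descents. In formulas, for $0\le j\le n-1$, $$P_b^r(0,j)=\sum_{\sigma\in S_n:\ d(\sigma)=j} Q_{b^r}(\sigma).$$
   Context: For $\sigma\in S_n$, $\sigma$ has a descent at $i$ ($1\le i\le n-1$) if $\sigma(i+1)<\sigma(i)$; $d(\sigma)$ is the number of descents. Binomial convention: for integers $m$ and $n\ge0$, $\binom{m}{n}=\frac{m(m-1)\cdots(m-n+1)}{n!}$ if $m\ge n$ and $\binom{m}{n}=0$ if $m<n$ (including negative $m$). The $b$-shuffle measure on $S_n$ is $Q_b(\sigma)=\binom{n+b-d(\sigma^{-1})-1}{n}/b^n$ (this is the law of the permutation produced by one $b$-shuffle of the Gilbert–Shannon–Reeds type: cut into $b$ packets multinomially and riffle dropping cards with probability proportional to packet size). It is known that performing an $a$-shuffle followed by a $b$-shuffle gives the law $Q_{ab}$, so $r$ successive $b$-shuffles from the identity yield law $Q_{b^r}$. The base-$b$ carries chain for adding $n$ numbers is the Markov chain $\kappa_0=0,\kappa_1,\kappa_2,\dots$ on $\{0,1,\dots,n-1\}$ given by $\kappa_{t+1}=\lfloor(\kappa_t+X_{t+1,1}+\dots+X_{t+1,n})/b\rfloor$, where the $X_{t,k}$ are i.i.d. uniform on $\{0,1,\dots,b-1\}$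 (the carries when $n$ random base-$b$ integers are added column by column). Its transition matrix is $P_b(i,j)=b^{-n}\sum_{l=0}^{j-\lfloor i/b\rfloor}(-1)^l\binom{n+1}{l}\binom{n-1-i+(j+1-l)b}{n}$, and $P_b^r$ denotes its $r$-step transition matrix. *)

theory Defs
  imports "HOL-Analysis.Analysis" "HOL-Combinatorics.Permutations"
begin

definition binom :: "int \<Rightarrow> nat \<Rightarrow> real" where
  "binom m k = (if m < int k then 0 else real (nat m choose k))"

definition descents :: "nat \<Rightarrow> (nat \<Rightarrow> nat) \<Rightarrow> nat" where
  "descents n \<sigma> = card {i \<in> {1..<n}. \<sigma> (i + 1) < \<sigma> i}"

definition shuffleQ :: "nat \<Rightarrow> nat \<Rightarrow> (nat \<Rightarrow> nat) \<Rightarrow> real" where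
  "shuffleQ b n \<sigma> =
     binom (int n + int b - int (descents n (inv \<sigma>)) - 1) n / real b ^ n"

definition carriesP :: "nat \<Rightarrow> nat \<Rightarrow> nat \<Rightarrow> nat \<Rightarrow> real" where
  "carriesP b n i j =
     (\<Sum>l\<in>{0..int j - int (i div b)}.
        (-1) ^ nat l * binom (int (n + 1)) (nat l)
          * binom (int n - 1 - int i + (int j + 1 - l) * int b) n) / real b ^ n"

fun carriesPpow :: "nat \<Rightarrow> nat \<Rightarrow> nat \<Rightarrow> nat \<Rightarrow> nat \<Rightarrow> real" where
  "carriesPpow b n 0 i j = (if i = j then 1 else 0)"
| "carriesPpow b n (Suc r) i j = (\<Sum>k<n. carriesPpow b n r i k * carriesP b n k j)"

end

theory Submission
  imports Defs
begin

text \<open>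
  Following Holte and Diaconis-Fulman,
  both sides are computed by counting words of length n over the alphabet 0..B-1, B = b^r:

  (1) The defining formula of the one-step matrix is an inclusion-exclusion count:
      b^n P_b(i,j) is the number of digit vectors w with (i + sum w) div b = j.  Splitting each
      letter below R*b into a low and a high digit gives the Chapman-Kolmogorov equation, so
      B^n P_b^r(0,j) is the number of words whose letter sum has quotient j by B.
  (2) Taking prefix sums modulo B is a bijection on words, turning the quotient of the total
      sum by B into the number of descents of the word.
  (3) Standardisation maps words to permutations preserving descents; the fibre over sigma
      consists, after relabelling by sigma, of the weakly increasing words that increase
      strictly at the descents of sigma^-1, and has binom(n+B-d(sigma^-1)-1, n) = B^n Q_B(sigma)
      elements by stars and bars.
  The theorem follows by summing (3) over the permutations with j descents and comparing
  with (1) via (2).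
\<close>

section \<open>Binomial coefficients with integer upper argument\<close>

lemma binom_of_nat: "binom (int N) k = real (N choose k)"
  by (simp add: binom_def binomial_eq_0)

lemma binom_eq_0: "m < int k \<Longrightarrow> binom m k = 0"
  by (simp add: binom_def)

lemma binom_pascal: "binom (m + 1) (Suc k) = binom m (Suc k) + binom m k"
proof -
  consider "m \<ge> int k + 1" | "m = int k" | "m < int k" by linarith
  then show ?thesis
  proof cases
    case 1
    then have "nat (m + 1) = Suc (nat m)" "nat m \<ge> k + 1" by linarith+
    with 1 show ?thesis by (simp add: binom_def)
  next
    case 2
    then have "nat (m + 1) = Suc k" by simp
    with 2 show ?thesis by (simp add: binom_def)
  qed (simp add: binom_def)
qed

lemma hockey_stick_up:
  "(\<Sum>t<M. binom (m + int t) k) = binom (m + int M) (Suc k) - binom m (Suc k)"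
proof (induction M)
  case (Suc M)
  have "binom (m + int M + 1) (Suc k) = binom (m + int M) (Suc k) + binom (m + int M) k"
    by (rule binom_pascal)
  with Suc show ?case by (simp add: algebra_simps)
qed simp

lemma hockey_stick_down:
  "(\<Sum>t<M. binom (m - int t) k) = binom (m + 1) (Suc k) - binom (m + 1 - int M) (Suc k)"
proof (induction M)
  case (Suc M)
  have "binom (m - int M + 1) (Suc k) = binom (m - int M) (Suc k) + binom (m - int M) k"
    by (rule binom_pascal)
  with Suc show ?case by (simp add: algebra_simps)
qed simp

text \<open>Summation by parts against alternating binomial weights: passing from weights
  of order n to order n+1 absorbs a forward difference.\<close>

lemma alternating_telescope:
  fixes g :: "nat \<Rightarrow> real"
  shows "(\<Sum>l\<le>n. (-1)^l * real (n choose l) * (g l - g (Suc l)))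
       = (\<Sum>l\<le>Suc n. (-1)^l * real (Suc n choose l) * g l)"
proof -
  have "(\<Sum>l\<le>Suc n. (-1)^l * real (Suc n choose l) * g l)
      = (\<Sum>l\<le>Suc n. (-1)^l * real (n choose l) * g l)
        + (\<Sum>l\<le>Suc n. (-1)^l * (if l = 0 then 0 else real (n choose (l - 1))) * g l)"
    by (subst sum.distrib[symmetric], rule sum.cong) (auto simp: choose_reduce_nat algebra_simps)
  also have "(\<Sum>l\<le>Suc n. (-1)^l * real (n choose l) * g l) = (\<Sum>l\<le>n. (-1)^l * real (n choose l) * g l)"
    by simp
  also have "(\<Sum>l\<le>Suc n. (-1)^l * (if l = 0 then 0 else real (n choose (l - 1))) * g l)
      = - (\<Sum>l\<le>n. (-1)^l * real (n choose l) * g (Suc l))"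
    by (subst sum.atMost_Suc_shift) (simp add: sum_negf[symmetric])
  finally show ?thesis
    by (simp add: right_diff_distrib sum_subtractf)
qed

section \<open>Words over a finite alphabet\<close>

definition words :: "nat \<Rightarrow> nat \<Rightarrow> (nat \<Rightarrow> nat) set" where
  "words n B = {1..n} \<rightarrow>\<^sub>E {..<B}"

lemma finite_words [simp]: "finite (words n B)"
  by (simp add: words_def finite_PiE)

lemma card_words: "card (words n B) = B ^ n"
  by (simp add: words_def card_funcsetE)

lemma words_less: "w \<in> words n B \<Longrightarrow> i \<in> {1..n} \<Longrightarrow> w i < B"
  by (auto simp: words_def)

lemma words_undefined: "w \<in> words n B \<Longrightarrow> i \<notin> {1..n} \<Longrightarrow> w i = undefined"
  by (auto simp: words_def)

lemma words_memI:
  "(\<And>i. i \<in> {1..n} \<Longrightarrow> w i < B) \<Longrightarrow> (\<And>i. i \<notin> {1..n} \<Longrightarrow> w i = undefined) \<Longrightarrow> w \<in> words n B"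
  by (auto simp: words_def)

lemma restrict_in_words: "(\<And>i. i \<in> {1..n} \<Longrightarrow> f i < B) \<Longrightarrow> restrict f {1..n} \<in> words n B"
  by (rule words_memI) auto

lemma card_filter_bij:
  assumes "bij_betw f A B"
  shows "card {y \<in> B. P y} = card {x \<in> A. P (f x)}"
  by (rule bij_betw_same_card[OF bij_betw_Collect[OF assms], symmetric]) simp

lemma inj_on_self_bij: "finite A \<Longrightarrow> f ` A \<subseteq> A \<Longrightarrow> inj_on f A \<Longrightarrow> bij_betw f A A"
  by (simp add: bij_betw_def endo_inj_surj)

lemma card_words_Suc:
  "card {w \<in> words (Suc n) B. P w} = (\<Sum>t<B. card {u \<in> words n B. P (u(Suc n := t))})"
proof -
  let ?ext = "\<lambda>(t, u). (u :: nat \<Rightarrow> nat)(Suc n := t)"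
  have "?ext ` ({..<B} \<times> words n B) = words (Suc n) B"
    using PiE_insert_eq[of "Suc n" "{1..n}" "\<lambda>_. {..<B}"]
    by (simp add: words_def atLeastAtMostSuc_conv)
  moreover have "inj_on ?ext ({..<B} \<times> words n B)"
    using inj_combinator[of "Suc n" "{1..n}" "\<lambda>_. {..<B}"] by (simp add: words_def)
  ultimately have "card {w \<in> words (Suc n) B. P w} = card {p \<in> {..<B} \<times> words n B. P (?ext p)}"
    by (intro card_filter_bij) (simp add: bij_betw_def)
  also have "{p \<in> {..<B} \<times> words n B. P (?ext p)} = (SIGMA t:{..<B}. {u \<in> words n B. P (u(Suc n := t))})"
    by auto
  finally show ?thesis
    by simp
qed

definition psum :: "(nat \<Rightarrow> nat) \<Rightarrow> nat \<Rightarrow> nat" where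
  "psum w k = (\<Sum>i\<in>{1..k}. w i)"

lemma psum_0 [simp]: "psum w 0 = 0"
  by (simp add: psum_def)

lemma psum_Suc: "psum w (Suc k) = psum w k + w (Suc k)"
  by (simp add: psum_def)

lemma psum_upd: "psum (w(Suc n := t)) (Suc n) = psum w n + t"
  by (simp add: psum_Suc psum_def)

lemma psum_le: "w \<in> words n B \<Longrightarrow> psum w n \<le> n * (B - 1)"
  using sum_bounded_above[of "{1..n}" w "B - 1"] by (force simp: psum_def dest: words_less)

definition count_sum_le :: "nat \<Rightarrow> nat \<Rightarrow> int \<Rightarrow> nat" where
  "count_sum_le b n m = card {w \<in> words n b. int (psum w n) \<le> m}"

lemma count_sum_le_formula:
  "real (count_sum_le b n m) =
     (\<Sum>l\<le>n. (-1)^l * real (n choose l) * binom (m - int l * int b + int n) n)"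
proof (induction n arbitrary: m)
  case 0
  have "words 0 b = {\<lambda>_. undefined}" by (simp add: words_def)
  then show ?case by (simp add: count_sum_le_def binom_def)
next
  case (Suc n)
  define g where "g l = binom (m - int l * int b + int (Suc n)) (Suc n)" for l
  have "real (count_sum_le b (Suc n) m) = (\<Sum>t<b. real (count_sum_le b n (m - int t)))"
    by (simp add: count_sum_le_def card_words_Suc psum_upd algebra_simps)
  also have "\<dots> = (\<Sum>l\<le>n. (-1)^l * real (n choose l) * (\<Sum>t<b. binom ((m - int l * int b + int n) - int t) n))"
    by (simp add: Suc sum_distrib_left algebra_simps sum.swap[where B = "{..n}"])
  also have "\<dots> = (\<Sum>l\<le>n. (-1)^l * real (n choose l) * (g l - g (Suc l)))"
  proof (rule sum.cong[OF refl])
    fix l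
    have "(\<Sum>t<b. binom ((m - int l * int b + int n) - int t) n) = g l - g (Suc l)"
      using hockey_stick_down[where M = b and m = "m - int l * int b + int n" and k = n] by (simp add: g_def algebra_simps)
    then show "(-1)^l * real (n choose l) * (\<Sum>t<b. binom ((m - int l * int b + int n) - int t) n)
      = (-1)^l * real (n choose l) * (g l - g (Suc l))" by simp
  qed
  also have "\<dots> = (\<Sum>l\<le>Suc n. (-1)^l * real (Suc n choose l) * g l)"
    by (rule alternating_telescope)
  finally show ?case by (simp add: g_def)
qed

section \<open>The one-step carries matrix\<close>

text \<open>The carry out of a column with incoming carry i and digits w is (i + sum w) div b.
  The closed formula defining carriesP is exactly the number of digit vectors producing
  outgoing carry j, divided by b^n.\<close>

lemma div_eq_iff_bounds:
  "(b::nat) > 0 \<Longrightarrow> a div b = j \<longleftrightarrow> j * b \<le> a \<and> a < Suc j * b"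
  by (metis div_less_iff_less_mult div_nat_eqI div_times_less_eq_dividend lessI mult.commute)

definition carry_count :: "nat \<Rightarrow> nat \<Rightarrow> nat \<Rightarrow> nat \<Rightarrow> nat" where
  "carry_count b n i j = card {w \<in> words n b. (i + psum w n) div b = j}"

lemma carry_count_as_difference:
  assumes "b > 0"
  shows "real (carry_count b n i j) =
    real (count_sum_le b n (int (Suc j * b) - 1 - int i)) - real (count_sum_le b n (int (j * b) - 1 - int i))"
proof -
  let ?le = "\<lambda>m. {w \<in> words n b. int (psum w n) \<le> m}"
  have "{w \<in> words n b. (i + psum w n) div b = j} = ?le (int (Suc j * b) - 1 - int i) - ?le (int (j * b) - 1 - int i)"
    using assms by (auto simp: div_eq_iff_bounds simp del: of_nat_mult mult_Suc)
  moreover have "?le (int (j * b) - 1 - int i) \<subseteq> ?le (int (Suc j * b) - 1 - int i)"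
    by auto
  ultimately show ?thesis
    by (simp add: carry_count_def count_sum_le_def card_Diff_subset card_mono of_nat_diff)
qed

lemma carry_count_formula:
  assumes "b > 0"
  shows "real (carry_count b n i j) =
    (\<Sum>l\<le>Suc n. (-1)^l * real (Suc n choose l) * binom (int n - 1 - int i + (int j + 1 - int l) * int b) n)"
proof -
  define m where "m = int (Suc j * b) - 1 - int i"
  define g where "g l = binom (m - int l * int b + int n) n" for l
  have shift: "int (j * b) - 1 - int i = m - int b"
    by (simp add: m_def algebra_simps)
  have "real (carry_count b n i j) = real (count_sum_le b n m) - real (count_sum_le b n (m - int b))"
    using carry_count_as_difference[OF assms, of n i j] by (simp only: shift m_def[symmetric])
  also have "\<dots> = (\<Sum>l\<le>n. (-1)^l * real (n choose l) * (g l - g (Suc l)))"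
    by (simp add: count_sum_le_formula g_def sum_subtractf[symmetric] algebra_simps)
  also have "\<dots> = (\<Sum>l\<le>Suc n. (-1)^l * real (Suc n choose l) * g l)"
    by (rule alternating_telescope)
  finally show ?thesis
    by (simp add: g_def m_def algebra_simps)
qed

text \<open>The terms of the defining sum vanish outside 0..n+1, so the range of summation
  can be normalised.\<close>

lemma carriesP_as_full_sum:
  "carriesP b n i j =
    (\<Sum>l\<le>Suc n. (-1)^l * real (Suc n choose l) * binom (int n - 1 - int i + (int j + 1 - int l) * int b) n)
    / real b ^ n"
proof -
  define F where "F l = (-1) ^ nat l * binom (int (n + 1)) (nat l)
      * binom (int n - 1 - int i + (int j + 1 - l) * int b) n" for l
  define J where "J = int j - int (i div b)"
  define K where "K = max J (int (Suc n))"
  have beyond_J: "F l = 0" if "l > J" for l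
  proof -
    have "(int j + 1 - l) * int b \<le> int (i div b) * int b"
      using that by (intro mult_right_mono) (auto simp: J_def)
    also have "\<dots> \<le> int i"
      by (metis div_times_less_eq_dividend of_nat_le_iff of_nat_mult)
    finally show ?thesis
      by (simp add: F_def binom_eq_0)
  qed
  have beyond_Suc_n: "F l = 0" if "l > int (Suc n)" for l
    using that by (simp add: F_def binom_def nat_less_iff)
  have "(\<Sum>l\<in>{0..J}. F l) = (\<Sum>l\<in>{0..K}. F l)"
    by (rule sum.mono_neutral_left) (auto simp: K_def beyond_J)
  also have "\<dots> = (\<Sum>l\<in>{0..int (Suc n)}. F l)"
    by (rule sum.mono_neutral_right) (auto simp: K_def beyond_Suc_n)
  also have "{0..int (Suc n)} = int ` {..Suc n}"
    by (simp add: image_int_atLeastAtMost atLeast0AtMost[symmetric])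
  also have "(\<Sum>l\<in>int ` {..Suc n}. F l) = (\<Sum>l\<le>Suc n. F (int l))"
    by (simp add: sum.reindex)
  finally show ?thesis
    by (simp add: carriesP_def F_def J_def binom_of_nat[of "Suc n", simplified] algebra_simps)
qed

lemma carriesP_carry_count: "b > 0 \<Longrightarrow> carriesP b n i j = real (carry_count b n i j) / real b ^ n"
  by (simp add: carriesP_as_full_sum carry_count_formula)

section \<open>Iterating the carries chain by splitting digits\<close>

text \<open>A letter below R*b
  is a low digit below R together with a high digit below b; the carry produced by the
  low digits is fed into the high digits.  This is the Chapman-Kolmogorov equation for the
  carries chain, and yields the r-step matrix P_b^r(0,j) = quot_count (b^r) n j / b^(rn).\<close>

definition quot_count :: "nat \<Rightarrow> nat \<Rightarrow> nat \<Rightarrow> nat" where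
  "quot_count B n j = card {w \<in> words n B. psum w n div B = j}"

lemma psum_div_less:
  assumes w: "w \<in> words n B" and n: "n \<ge> 1"
  shows "psum w n div B < n"
proof (cases "B = 0")
  case False
  have "psum w n \<le> n * (B - 1)" by (rule psum_le[OF w])
  also have "\<dots> < n * B" using n False by simp
  finally show ?thesis by (rule less_mult_imp_div_less)
qed (use n in simp)

definition digit_merge :: "nat \<Rightarrow> nat \<Rightarrow> (nat \<Rightarrow> nat) \<times> (nat \<Rightarrow> nat) \<Rightarrow> (nat \<Rightarrow> nat)" where
  "digit_merge R n p = restrict (\<lambda>i. fst p i + R * snd p i) {1..n}"

definition digit_split :: "nat \<Rightarrow> nat \<Rightarrow> (nat \<Rightarrow> nat) \<Rightarrow> (nat \<Rightarrow> nat) \<times> (nat \<Rightarrow> nat)" where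
  "digit_split R n w = (restrict (\<lambda>i. w i mod R) {1..n}, restrict (\<lambda>i. w i div R) {1..n})"

lemma digit_merge_bij:
  assumes R: "R > 0"
  shows "bij_betw (digit_merge R n) (words n R \<times> words n b) (words n (R * b))"
proof (rule bij_betw_byWitness[where f' = "digit_split R n"])
  show "\<forall>p\<in>words n R \<times> words n b. digit_split R n (digit_merge R n p) = p"
  proof (intro ballI, elim SigmaE)
    fix p u v assume p: "p = (u, v)" and u: "u \<in> words n R" and v: "v \<in> words n b"
    have "restrict (\<lambda>i. digit_merge R n p i mod R) {1..n} = u"
      using R by (auto simp: p digit_merge_def words_undefined[OF u] words_less[OF u])
    moreover have "restrict (\<lambda>i. digit_merge R n p i div R) {1..n} = v"
      using R by (auto simp: p digit_merge_def words_undefined[OF v] words_less[OF u])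
    ultimately show "digit_split R n (digit_merge R n p) = p"
      by (simp add: p digit_split_def)
  qed
  show "\<forall>w\<in>words n (R * b). digit_merge R n (digit_split R n w) = w"
    by (auto simp: digit_merge_def digit_split_def fun_eq_iff words_undefined)
  show "digit_merge R n ` (words n R \<times> words n b) \<subseteq> words n (R * b)"
  proof (intro subsetI, elim imageE SigmaE)
    fix w p u v assume w: "w = digit_merge R n p" and p: "p = (u, v)"
      and u: "u \<in> words n R" and v: "v \<in> words n b"
    have "u i + R * v i < R * b" if i: "i \<in> {1..n}" for i
    proof -
      have "u i + R * v i < R * (v i + 1)" using words_less[OF u i] by simp
      also have "\<dots> \<le> R * b" using words_less[OF v i] by (intro mult_left_mono) auto
      finally show ?thesis .
    qed
    then show "w \<in> words n (R * b)"
      unfolding w p digit_merge_def by (intro restrict_in_words) simp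
  qed
  show "digit_split R n ` words n (R * b) \<subseteq> words n R \<times> words n b"
  proof (intro subsetI, elim imageE)
    fix w p assume w: "w \<in> words n (R * b)" and p: "p = digit_split R n w"
    have "w i div R < b" if "i \<in> {1..n}" for i
      using words_less[OF w that] R by (simp add: div_less_iff_less_mult mult.commute)
    moreover have "w i mod R < R" for i
      using R by simp
    ultimately show "p \<in> words n R \<times> words n b"
      unfolding p digit_split_def by (blast intro: restrict_in_words)
  qed
qed

lemma psum_digit_merge: "psum (digit_merge R n (u, v)) n = psum u n + R * psum v n"
  by (simp add: psum_def digit_merge_def sum.distrib sum_distrib_left)

lemma quot_count_mult:
  assumes b: "b > 0" and R: "R > 0" and n: "n \<ge> 1"
  shows "quot_count (R * b) n j = (\<Sum>k<n. quot_count R n k * carry_count b n k j)"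
proof -
  have bij: "bij_betw (digit_merge R n) (words n R \<times> words n b) (words n (R * b))"
    by (rule digit_merge_bij[OF R])
  have quot: "(psum u n + R * psum v n) div (R * b) = (psum u n div R + psum v n) div b" for u v
    by (simp add: div_mult2_eq R add.commute)
  have "quot_count (R * b) n j = card {p \<in> words n R \<times> words n b. psum (digit_merge R n p) n div (R * b) = j}"
    unfolding quot_count_def by (rule card_filter_bij[OF bij])
  also have "{p \<in> words n R \<times> words n b. psum (digit_merge R n p) n div (R * b) = j}
      = (SIGMA u:words n R. {v \<in> words n b. (psum u n div R + psum v n) div b = j})"
    by (auto simp: psum_digit_merge quot)
  also have "card \<dots> = (\<Sum>u\<in>words n R. card {v \<in> words n b. (psum u n div R + psum v n) div b = j})"
    by simp
  also have "\<dots> = (\<Sum>k<n. \<Sum>u\<in>{u \<in> words n R. psum u n div R = k}. carry_count b n k j)"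
    by (subst sum.group[symmetric, where g = "\<lambda>u. psum u n div R" and T = "{..<n}"])
       (auto intro: psum_div_less n simp: carry_count_def)
  finally show ?thesis
    by (simp add: quot_count_def)
qed

lemma carriesPpow_quot_count:
  assumes b: "b > 0" and n: "n \<ge> 1"
  shows "carriesPpow b n r 0 j = real (quot_count (b ^ r) n j) / real (b ^ r) ^ n"
proof (induction r arbitrary: j)
  case 0
  have "psum w n = 0" if "w \<in> words n 1" for w
    using words_less[OF that] by (simp add: psum_def)
  then have "{w \<in> words n 1. psum w n div 1 = j} = (if j = 0 then words n 1 else {})"
    by auto
  then show ?case by (simp add: quot_count_def card_words)
next
  case (Suc r)
  have "carriesPpow b n (Suc r) 0 j
      = (\<Sum>k<n. real (quot_count (b ^ r) n k) / real (b ^ r) ^ n * (real (carry_count b n k j) / real b ^ n))"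
    by (simp add: Suc carriesP_carry_count[OF b])
  also have "\<dots> = real (\<Sum>k<n. quot_count (b ^ r) n k * carry_count b n k j) / real (b ^ Suc r) ^ n"
    by (simp add: sum_divide_distrib power_mult_distrib mult.commute)
  also have "(\<Sum>k<n. quot_count (b ^ r) n k * carry_count b n k j) = quot_count (b ^ Suc r) n j"
    using quot_count_mult[OF b _ n, of "b ^ r" j] b by (simp add: mult.commute)
  finally show ?case .
qed

section \<open>Descents of words and prefix sums modulo B\<close>

text \<open>The map sending a word to its prefix sums modulo B is a bijection on words over
  0..B-1, and the descents of the image count how often the prefix sum wraps around B,
  i.e. equal the quotient of the total sum by B.\<close>

definition word_descents :: "nat \<Rightarrow> (nat \<Rightarrow> nat) \<Rightarrow> nat" where
  "word_descents n w = card {i \<in> {1..<n}. w (i + 1) < w i}"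

lemma div_add_digit:
  assumes "(x::nat) < B"
  shows "(S + x) div B = S div B + (if (S + x) mod B < S mod B then 1 else 0)"
proof -
  have B: "B > 0" using assms by simp
  define q r where "q = S div B" and "r = S mod B"
  have S: "S = r + B * q" and r: "r < B" using B by (simp_all add: q_def r_def)
  show ?thesis
  proof (cases "r + x < B")
    case True
    have e: "S + x = (r + x) + B * q"
      using S by simp
    have "(S + x) div B = q" "(S + x) mod B = r + x"
      using True unfolding e by simp_all
    then show ?thesis by (simp add: q_def[symmetric] r_def[symmetric])
  next
    case False
    have e: "S + x = (r + x - B) + B * (q + 1)"
      using S False by (simp add: algebra_simps)
    have small: "r + x - B < B" "r + x - B < r"
      using r assms False by simp_all
    then have "(S + x) div B = q + 1" "(S + x) mod B = r + x - B"
      unfolding e using B by (simp_all add: div_mult_self2 del: mult_Suc_right add_Suc_right)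
    then show ?thesis using small by (simp add: q_def[symmetric] r_def[symmetric])
  qed
qed

lemma psum_div_eq_count_mod_drops:
  assumes "B > 0" and "\<forall>i\<in>{1..m}. x i < B"
  shows "psum x m div B = card {i \<in> {1..<m}. psum x (i + 1) mod B < psum x i mod B}"
  using assms(2)
proof (induction m)
  case (Suc m)
  let ?drop = "\<lambda>i. psum x (i + 1) mod B < psum x i mod B"
  show ?case
  proof (cases "m = 0")
    case True
    then show ?thesis using Suc.prems by (simp add: psum_def)
  next
    case False
    have "{i \<in> {1..<Suc m}. ?drop i} = (if ?drop m then insert m {i \<in> {1..<m}. ?drop i} else {i \<in> {1..<m}. ?drop i})"
      using False by (auto simp: less_Suc_eq)
    moreover have "psum x (Suc m) div B = psum x m div B + (if ?drop m then 1 else 0)"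
      using div_add_digit[of "x (Suc m)" B "psum x m"] Suc.prems by (simp add: psum_Suc)
    ultimately show ?thesis using Suc by simp
  qed
qed simp

definition prefix_mod :: "nat \<Rightarrow> nat \<Rightarrow> (nat \<Rightarrow> nat) \<Rightarrow> (nat \<Rightarrow> nat)" where
  "prefix_mod B n x = restrict (\<lambda>k. psum x k mod B) {1..n}"

lemma word_descents_prefix_mod:
  assumes "B > 0" and "x \<in> words n B"
  shows "word_descents n (prefix_mod B n x) = psum x n div B"
proof -
  have "word_descents n (prefix_mod B n x) = card {i \<in> {1..<n}. psum x (i + 1) mod B < psum x i mod B}"
    unfolding word_descents_def prefix_mod_def by (intro arg_cong[where f = card]) auto
  also have "\<dots> = psum x n div B"
    using assms by (intro psum_div_eq_count_mod_drops[symmetric]) (auto dest: words_less)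
  finally show ?thesis .
qed

lemma mod_add_left_cancel_less:
  fixes S u v B :: nat
  assumes "(S + u) mod B = (S + v) mod B" and "u < B" and "v < B"
  shows "u = v"
proof (rule ccontr)
  assume "u \<noteq> v"
  have "int (S + u) mod int B = int (S + v) mod int B"
    using assms(1) by (metis of_nat_mod)
  then have "int B dvd int u - int v"
    by (simp add: mod_eq_dvd_iff)
  then have "\<bar>int B\<bar> \<le> \<bar>int u - int v\<bar>"
    using \<open>u \<noteq> v\<close> by (intro dvd_imp_le_int) simp_all
  then show False
    using assms(2,3) by linarith
qed

lemma prefix_mod_inj:
  assumes "B > 0"
  shows "inj_on (prefix_mod B n) (words n B)"
proof (rule inj_onI)
  fix x y assume x: "x \<in> words n B" and y: "y \<in> words n B" and eq: "prefix_mod B n x = prefix_mod B n y"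
  have prefix_agree: "\<forall>i\<in>{1..k}. x i = y i" if "k \<le> n" for k
    using that
  proof (induction k)
    case (Suc k)
    have prefix_eq: "\<forall>i\<in>{1..k}. x i = y i"
      using Suc by simp
    have same_prefix: "psum x k = psum y k"
      unfolding psum_def by (rule sum.cong[OF refl]) (use prefix_eq in simp)
    have "psum x (Suc k) mod B = psum y (Suc k) mod B"
      using fun_cong[OF eq, of "Suc k"] Suc.prems by (simp add: prefix_mod_def)
    then have "(psum x k + x (Suc k)) mod B = (psum x k + y (Suc k)) mod B"
      by (simp add: psum_Suc same_prefix)
    moreover have "x (Suc k) < B" "y (Suc k) < B"
      using Suc.prems by (simp_all add: words_less[OF x] words_less[OF y])
    ultimately have "x (Suc k) = y (Suc k)"
      by (rule mod_add_left_cancel_less)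
    with prefix_eq show ?case
      by (simp add: atLeastAtMostSuc_conv)
  qed simp
  show "x = y"
    using prefix_agree[OF order_refl] by (intro PiE_ext[OF x[unfolded words_def] y[unfolded words_def]]) simp
qed

lemma prefix_mod_bij:
  assumes "B > 0"
  shows "bij_betw (prefix_mod B n) (words n B) (words n B)"
proof (rule inj_on_self_bij[OF finite_words _ prefix_mod_inj[OF assms]])
  have "prefix_mod B n x \<in> words n B" for x
    unfolding prefix_mod_def by (rule restrict_in_words) (simp add: assms)
  then show "prefix_mod B n ` words n B \<subseteq> words n B"
    by blast
qed

lemma card_word_descents:
  assumes "B > 0"
  shows "card {w \<in> words n B. word_descents n w = j} = quot_count B n j"
proof -
  have "card {w \<in> words n B. word_descents n w = j}
      = card {x \<in> words n B. word_descents n (prefix_mod B n x) = j}"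
    by (rule card_filter_bij[OF prefix_mod_bij[OF assms]])
  also have "\<dots> = quot_count B n j"
    unfolding quot_count_def using word_descents_prefix_mod[OF assms]
    by (intro arg_cong[where f = card]) auto
  finally show ?thesis .
qed

section \<open>Standardisation of words\<close>

text \<open>With g the identity this is the
  order used to standardise a word; with g a permutation it describes the words whose
  standardisation is a given permutation.\<close>

definition lex_less :: "(nat \<Rightarrow> nat) \<Rightarrow> (nat \<Rightarrow> nat) \<Rightarrow> nat \<Rightarrow> nat \<Rightarrow> bool" where
  "lex_less f g k i \<longleftrightarrow> f k < f i \<or> (f k = f i \<and> g k < g i)"

lemma lex_less_trans: "lex_less f g a b \<Longrightarrow> lex_less f g b c \<Longrightarrow> lex_less f g a c"
  by (auto simp: lex_less_def)

lemma lex_less_asym: "lex_less f g a b \<Longrightarrow> \<not> lex_less f g b a"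
  by (auto simp: lex_less_def)

lemma lex_less_total: "inj g \<Longrightarrow> a \<noteq> b \<Longrightarrow> lex_less f g a b \<or> lex_less f g b a"
  unfolding lex_less_def by (metis inj_eq nat_neq_iff)

text \<open>The standardisation of a word w replaces each letter by its rank, ties being broken
  from left to right; it is a permutation of 1..n with the same descents as w.\<close>

definition standardize :: "nat \<Rightarrow> (nat \<Rightarrow> nat) \<Rightarrow> nat \<Rightarrow> nat" where
  "standardize n w i = (if i \<in> {1..n} then card {k \<in> {1..n}. lex_less w id k i \<or> k = i} else i)"

lemma standardize_outside: "i \<notin> {1..n} \<Longrightarrow> standardize n w i = i"
  unfolding standardize_def by (rule if_not_P)

lemma standardize_strict_mono:
  assumes i: "i \<in> {1..n}" and k: "k \<in> {1..n}" and less: "lex_less w id k i"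
  shows "standardize n w k < standardize n w i"
proof -
  have "{k' \<in> {1..n}. lex_less w id k' k \<or> k' = k} \<subset> {k' \<in> {1..n}. lex_less w id k' i \<or> k' = i}"
    using less i lex_less_asym[OF less] by (auto intro: lex_less_trans)
  then show ?thesis
    using i k by (simp add: standardize_def psubset_card_mono)
qed

lemma standardize_range:
  assumes "i \<in> {1..n}"
  shows "standardize n w i \<in> {1..n}"
proof -
  have "card {k \<in> {1..n}. lex_less w id k i \<or> k = i} \<le> card {1..n}"
    by (rule card_mono) auto
  moreover have "{k \<in> {1..n}. lex_less w id k i \<or> k = i} \<noteq> {}"
    using assms by auto
  ultimately show ?thesis
    using assms by (simp add: standardize_def Suc_le_eq card_gt_0_iff)
qed

lemma standardize_inj: "inj_on (standardize n w) {1..n}"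
proof (rule inj_onI, rule ccontr)
  fix i k assume i: "i \<in> {1..n}" and k: "k \<in> {1..n}" and "i \<noteq> k"
  then have "lex_less w id i k \<or> lex_less w id k i"
    by (simp add: lex_less_total)
  then show "standardize n w i = standardize n w k \<Longrightarrow> False"
    using standardize_strict_mono[OF i k, of w] standardize_strict_mono[OF k i, of w] by auto
qed

lemma standardize_permutes: "standardize n w permutes {1..n}"
proof (rule bij_imp_permutes)
  show "bij_betw (standardize n w) {1..n} {1..n}"
    using standardize_range by (intro inj_on_self_bij standardize_inj) auto
qed (rule standardize_outside)

lemma word_descents_standardize: "word_descents n w = descents n (standardize n w)"
proof -
  have "w (i + 1) < w i \<longleftrightarrow> standardize n w (i + 1) < standardize n w i" if "i \<in> {1..<n}" for i
  proof -
    have i: "i \<in> {1..n}" "i + 1 \<in> {1..n}" using that by auto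
    have "w (i + 1) < w i \<longleftrightarrow> lex_less w id (i + 1) i"
      by (auto simp: lex_less_def)
    moreover have "\<not> w (i + 1) < w i \<longleftrightarrow> lex_less w id i (i + 1)"
      by (auto simp: lex_less_def)
    ultimately show ?thesis
      using standardize_strict_mono[OF i] standardize_strict_mono[OF i(2,1)]
      by (meson not_less_iff_gr_or_eq order_less_asym)
  qed
  then show ?thesis
    unfolding word_descents_def descents_def by (intro arg_cong[where f = card]) auto
qed

lemma card_le_permutation:
  assumes p: "p permutes {1..n}" and i: "i \<in> {1..n}"
  shows "card {k \<in> {1..n}. p k \<le> p i} = p i"
proof -
  have "p ` {k \<in> {1..n}. p k \<le> p i} = {m \<in> p ` {1..n}. m \<le> p i}"
    by auto
  also have "\<dots> = {1..p i}"
    using permutes_image[OF p] permutes_in_image[OF p, of i] i by auto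
  finally have "card (p ` {k \<in> {1..n}. p k \<le> p i}) = p i"
    by simp
  moreover have "inj_on p {k \<in> {1..n}. p k \<le> p i}"
    using permutes_inj[OF p] by (auto intro: inj_on_subset)
  ultimately show ?thesis
    by (simp add: card_image)
qed

lemma standardize_eq_iff:
  assumes p: "\<sigma> permutes {1..n}"
  shows "standardize n w = \<sigma> \<longleftrightarrow> (\<forall>i\<in>{1..n}. \<forall>k\<in>{1..n}. lex_less w id k i \<longrightarrow> \<sigma> k < \<sigma> i)"
proof
  assume "standardize n w = \<sigma>"
  then show "\<forall>i\<in>{1..n}. \<forall>k\<in>{1..n}. lex_less w id k i \<longrightarrow> \<sigma> k < \<sigma> i"
    using standardize_strict_mono by blast
next
  assume order: "\<forall>i\<in>{1..n}. \<forall>k\<in>{1..n}. lex_less w id k i \<longrightarrow> \<sigma> k < \<sigma> i"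
  have "standardize n w i = \<sigma> i" if i: "i \<in> {1..n}" for i
  proof -
    have "lex_less w id k i \<or> k = i \<longleftrightarrow> \<sigma> k \<le> \<sigma> i" if k: "k \<in> {1..n}" for k
      using order i k lex_less_total[where g = id and f = w and a = k and b = i] by (cases "k = i") (auto, fastforce+)
    then have "{k \<in> {1..n}. lex_less w id k i \<or> k = i} = {k \<in> {1..n}. \<sigma> k \<le> \<sigma> i}"
      by auto
    then show ?thesis
      using i card_le_permutation[OF p i] by (simp add: standardize_def)
  qed
  then show "standardize n w = \<sigma>"
    using permutes_not_in[OF p] standardize_outside by (metis ext)
qed

section \<open>Words that ascend with prescribed strict steps\<close>

lemma chain_consecutive:
  fixes R :: "nat \<Rightarrow> nat \<Rightarrow> bool" and a c n :: nat
  assumes trans: "transp R" and step: "\<forall>a\<in>{1..<n}. R a (a + 1)"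
    and "1 \<le> a" "a < c" "c \<le> n"
  shows "R a c"
proof -
  have "a < c \<Longrightarrow> 1 \<le> a \<longrightarrow> c \<le> n \<longrightarrow> R a c"
  proof (induction a c rule: less_Suc_induct)
    case (1 i)
    then show ?case using step by simp
  next
    case (2 i j k)
    then show ?case using transpD[OF trans] by (meson less_imp_le_nat order.trans less_le_trans)
  qed
  then show ?thesis using assms(3-5) by blast
qed

text \<open>Weakly increasing words over 1..n that increase strictly at every position of D.
  Their number is the binomial coefficient of the shuffle measure (stars and bars).\<close>

definition ascending_with :: "nat \<Rightarrow> nat set \<Rightarrow> (nat \<Rightarrow> nat) \<Rightarrow> bool" where
  "ascending_with n D v \<longleftrightarrow> (\<forall>a\<in>{1..<n}. v a + (if a \<in> D then 1 else 0) \<le> v (a + 1))"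

lemma ascending_le_last:
  assumes "ascending_with n D v" and "i \<in> {1..n}"
  shows "v i \<le> v n"
proof (cases "i = n")
  case False
  show ?thesis
  proof (rule chain_consecutive[where R = "\<lambda>a c. v a \<le> v c"])
    show "transp (\<lambda>a c. v a \<le> v c)"
      by (auto intro: transpI)
    show "\<forall>a\<in>{1..<n}. v a \<le> v (a + 1)"
      using assms(1) unfolding ascending_with_def by fastforce
  qed (use assms(2) False in auto)
qed simp

lemma ascending_with_extend:
  "ascending_with (Suc (Suc m)) D (u(Suc (Suc m) := t)) \<longleftrightarrow>
     ascending_with (Suc m) D u \<and> u (Suc m) + (if Suc m \<in> D then 1 else 0) \<le> t"
proof -
  have "{1..<Suc (Suc m)} = insert (Suc m) {1..<Suc m}"
    by auto
  moreover have "(\<forall>a\<in>{1..<Suc m}. (u(Suc (Suc m) := t)) a + (if a \<in> D then 1 else 0) \<le> (u(Suc (Suc m) := t)) (a + 1))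
     \<longleftrightarrow> ascending_with (Suc m) D u"
    unfolding ascending_with_def by (intro ball_cong refl) auto
  ultimately show ?thesis
    unfolding ascending_with_def[of "Suc (Suc m)"] by auto
qed

lemma ascending_words_slice:
  fixes m t B :: nat and D :: "nat set"
  assumes "t < B"
  defines "e \<equiv> if Suc m \<in> D then 1 else 0"
  shows "{u \<in> words (Suc m) B. ascending_with (Suc (Suc m)) D (u(Suc (Suc m) := t))}
       = {u \<in> words (Suc m) (t + 1 - e). ascending_with (Suc m) D u}"
proof (intro set_eqI iffI; elim CollectE conjE; intro CollectI conjI)
  fix u assume u: "u \<in> words (Suc m) B" and asc: "ascending_with (Suc (Suc m)) D (u(Suc (Suc m) := t))"
  then show asc': "ascending_with (Suc m) D u"
    by (simp add: ascending_with_extend)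
  have "u i < t + 1 - e" if "i \<in> {1..Suc m}" for i
    using ascending_le_last[OF asc' that] asc by (auto simp: ascending_with_extend e_def split: if_splits)
  then show "u \<in> words (Suc m) (t + 1 - e)"
    by (intro words_memI words_undefined[OF u])
next
  fix u assume u: "u \<in> words (Suc m) (t + 1 - e)" and asc: "ascending_with (Suc m) D u"
  have "u i < B" if "i \<in> {1..Suc m}" for i
    using words_less[OF u that] assms(1) by simp
  then show "u \<in> words (Suc m) B"
    by (intro words_memI words_undefined[OF u])
  have "u (Suc m) < t + 1 - e"
    by (rule words_less[OF u]) simp
  then show "ascending_with (Suc (Suc m)) D (u(Suc (Suc m) := t))"
    using asc by (simp add: ascending_with_extend e_def)
qed

lemma card_ascending_words:
  "real (card {v \<in> words (Suc m) B. ascending_with (Suc m) D v})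
     = binom (int B + int (Suc m) - 1 - int (card (D \<inter> {1..<Suc m}))) (Suc m)"
proof (induction m arbitrary: B)
  case 0
  have "{v \<in> words (Suc 0) B. ascending_with (Suc 0) D v} = words (Suc 0) B"
    by (auto simp: ascending_with_def)
  then show ?case by (simp add: card_words binom_of_nat)
next
  case (Suc m)
  define e where "e = (if Suc m \<in> D then 1 else 0 :: nat)"
  define c where "c = int (Suc m) - int e - int (card (D \<inter> {1..<Suc m}))"
  have "real (card {v \<in> words (Suc (Suc m)) B. ascending_with (Suc (Suc m)) D v})
      = (\<Sum>t<B. real (card {u \<in> words (Suc m) (t + 1 - e). ascending_with (Suc m) D u}))"
    by (simp add: card_words_Suc ascending_words_slice e_def)
  also have "\<dots> = (\<Sum>t<B. binom (c + int t) (Suc m))"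
    by (intro sum.cong refl) (simp add: Suc.IH c_def e_def algebra_simps)
  also have "\<dots> = binom (c + int B) (Suc (Suc m))"
    by (simp add: hockey_stick_up binom_eq_0 c_def)
  also have "card (D \<inter> {1..<Suc (Suc m)}) = card (D \<inter> {1..<Suc m}) + e"
  proof -
    have "D \<inter> {1..<Suc (Suc m)} = (D \<inter> {1..<Suc m}) \<union> (if Suc m \<in> D then {Suc m} else {})"
      by (auto simp: less_Suc_eq)
    then show ?thesis by (auto simp: e_def)
  qed
  ultimately show ?case by (simp add: c_def algebra_simps)
qed

section \<open>Fibres of standardisation and the main theorem\<close>

lemma ascending_iff_lex_sorted:
  assumes tau: "\<tau> permutes {1..n}"
  shows "(\<forall>a\<in>{1..n}. \<forall>c\<in>{1..n}. lex_less v \<tau> a c \<longrightarrow> a < c)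
         \<longleftrightarrow> ascending_with n {a. \<tau> (a + 1) < \<tau> a} v"
proof
  assume sorted: "\<forall>a\<in>{1..n}. \<forall>c\<in>{1..n}. lex_less v \<tau> a c \<longrightarrow> a < c"
  have "v a + (if \<tau> (a + 1) < \<tau> a then 1 else 0) \<le> v (a + 1)" if a: "a \<in> {1..<n}" for a
  proof -
    have "a + 1 \<in> {1..n}" "a \<in> {1..n}"
      using a by auto
    then have "\<not> lex_less v \<tau> (a + 1) a"
      using sorted[rule_format, of "a + 1" a] by auto
    then show ?thesis
      by (auto simp: lex_less_def)
  qed
  then show "ascending_with n {a. \<tau> (a + 1) < \<tau> a} v"
    by (simp add: ascending_with_def)
next
  assume asc: "ascending_with n {a. \<tau> (a + 1) < \<tau> a} v"
  have step: "\<forall>a\<in>{1..<n}. lex_less v \<tau> a (a + 1)"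
  proof
    fix a assume a: "a \<in> {1..<n}"
    have "\<tau> a \<noteq> \<tau> (a + 1)"
      using permutes_inj[OF tau] by (simp add: inj_eq)
    moreover have "v a + (if \<tau> (a + 1) < \<tau> a then 1 else 0) \<le> v (a + 1)"
      using asc a by (simp add: ascending_with_def)
    ultimately show "lex_less v \<tau> a (a + 1)"
      by (auto simp: lex_less_def split: if_splits)
  qed
  have trans: "transp (lex_less v \<tau>)"
    by (auto intro: transpI lex_less_trans)
  show "\<forall>a\<in>{1..n}. \<forall>c\<in>{1..n}. lex_less v \<tau> a c \<longrightarrow> a < c"
  proof (intro ballI impI, rule ccontr)
    fix a c assume a: "a \<in> {1..n}" and c: "c \<in> {1..n}" and less: "lex_less v \<tau> a c" and "\<not> a < c"
    then consider "a = c" | "c < a" by linarith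
    then show False
    proof cases
      case 1
      then show False using less by (simp add: lex_less_def)
    next
      case 2
      with a c have "1 \<le> c" "c < a" "a \<le> n"
        by auto
      then have "lex_less v \<tau> c a"
        by (rule chain_consecutive[OF trans step])
      then show False using lex_less_asym[OF less] by simp
    qed
  qed
qed

definition relabel :: "(nat \<Rightarrow> nat) \<Rightarrow> nat \<Rightarrow> (nat \<Rightarrow> nat) \<Rightarrow> (nat \<Rightarrow> nat)" where
  "relabel \<sigma> n v = restrict (\<lambda>i. v (\<sigma> i)) {1..n}"

lemma relabel_bij:
  assumes p: "\<sigma> permutes {1..n}"
  shows "bij_betw (relabel \<sigma> n) (words n B) (words n B)"
proof (rule inj_on_self_bij[OF finite_words])
  have "relabel \<sigma> n v \<in> words n B" if "v \<in> words n B" for v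
    unfolding relabel_def using words_less[OF that] permutes_in_image[OF p]
    by (intro restrict_in_words) simp
  then show "relabel \<sigma> n ` words n B \<subseteq> words n B"
    by blast
  show "inj_on (relabel \<sigma> n) (words n B)"
  proof (rule inj_onI)
    fix v v' assume v: "v \<in> words n B" and v': "v' \<in> words n B" and eq: "relabel \<sigma> n v = relabel \<sigma> n v'"
    have "v i = v' i" if "i \<in> {1..n}" for i
    proof -
      have "inv \<sigma> i \<in> {1..n}" and "\<sigma> (inv \<sigma> i) = i"
        using that permutes_in_image[OF permutes_inv[OF p]] permutes_inverses(1)[OF p] by auto
      then show ?thesis
        using fun_cong[OF eq, of "inv \<sigma> i"] by (simp add: relabel_def)
    qed
    then show "v = v'"
      by (intro PiE_ext[OF v[unfolded words_def] v'[unfolded words_def]])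
  qed
qed

lemma standardize_relabel_iff:
  assumes p: "\<sigma> permutes {1..n}"
  shows "standardize n (relabel \<sigma> n v) = \<sigma> \<longleftrightarrow> ascending_with n {a. inv \<sigma> (a + 1) < inv \<sigma> a} v"
proof -
  define \<tau> where "\<tau> = inv \<sigma>"
  have tau: "\<tau> permutes {1..n}"
    unfolding \<tau>_def by (rule permutes_inv[OF p])
  have \<sigma>\<tau>: "\<sigma> (\<tau> a) = a" for a
    unfolding \<tau>_def by (rule permutes_inverses(1)[OF p])
  have \<tau>_onto: "\<tau> ` {1..n} = {1..n}"
    by (rule permutes_image[OF tau])
  have lex: "lex_less (relabel \<sigma> n v) id (\<tau> a) (\<tau> c) \<longleftrightarrow> lex_less v \<tau> a c"
    if "a \<in> {1..n}" "c \<in> {1..n}" for a c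
    using that permutes_in_image[OF tau] by (simp add: lex_less_def relabel_def \<sigma>\<tau>)
  have "standardize n (relabel \<sigma> n v) = \<sigma>
      \<longleftrightarrow> (\<forall>i\<in>{1..n}. \<forall>k\<in>{1..n}. lex_less (relabel \<sigma> n v) id k i \<longrightarrow> \<sigma> k < \<sigma> i)"
    by (rule standardize_eq_iff[OF p])
  also have "\<dots> \<longleftrightarrow> (\<forall>c\<in>{1..n}. \<forall>a\<in>{1..n}. lex_less (relabel \<sigma> n v) id (\<tau> a) (\<tau> c) \<longrightarrow> \<sigma> (\<tau> a) < \<sigma> (\<tau> c))"
    by (subst (1 2) \<tau>_onto[symmetric]) simp
  also have "\<dots> \<longleftrightarrow> (\<forall>a\<in>{1..n}. \<forall>c\<in>{1..n}. lex_less v \<tau> a c \<longrightarrow> a < c)"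
    using lex by (auto simp: \<sigma>\<tau>)
  also have "\<dots> \<longleftrightarrow> ascending_with n {a. \<tau> (a + 1) < \<tau> a} v"
    by (rule ascending_iff_lex_sorted[OF tau])
  finally show ?thesis
    by (simp add: \<tau>_def)
qed

lemma card_standardize_fiber:
  assumes p: "\<sigma> permutes {1..n}" and n: "n \<ge> 1"
  shows "real (card {w \<in> words n B. standardize n w = \<sigma>})
     = binom (int n + int B - int (descents n (inv \<sigma>)) - 1) n"
proof -
  obtain m where m: "n = Suc m"
    using n by (cases n) auto
  have "card {w \<in> words n B. standardize n w = \<sigma>}
      = card {v \<in> words n B. standardize n (relabel \<sigma> n v) = \<sigma>}"
    by (rule card_filter_bij[OF relabel_bij[OF p]])
  also have "\<dots> = card {v \<in> words n B. ascending_with n {a. inv \<sigma> (a + 1) < inv \<sigma> a} v}"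
    using standardize_relabel_iff[OF p] by simp
  moreover have "card ({a. inv \<sigma> (a + 1) < inv \<sigma> a} \<inter> {1..<n}) = descents n (inv \<sigma>)"
    unfolding descents_def by (intro arg_cong[where f = card]) auto
  ultimately show ?thesis
    using card_ascending_words[of m B "{a. inv \<sigma> (a + 1) < inv \<sigma> a}"] by (simp add: m algebra_simps)
qed

text \<open>Since standardisation preserves descents, words with j descents are partitioned by
  the fibres over permutations with j descents.\<close>

lemma card_descents_by_standardization:
  "card {w \<in> words n B. word_descents n w = j}
     = (\<Sum>\<sigma>\<in>{\<sigma>. \<sigma> permutes {1..n} \<and> descents n \<sigma> = j}. card {w \<in> words n B. standardize n w = \<sigma>})"
proof -
  let ?T = "{\<sigma>. \<sigma> permutes {1..n} \<and> descents n \<sigma> = j}"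
  let ?X = "{w \<in> words n B. word_descents n w = j}"
  have "finite ?T"
    by (rule finite_subset[OF _ finite_permutations[of "{1..n}"]]) auto
  moreover have "standardize n ` ?X \<subseteq> ?T"
    using standardize_permutes word_descents_standardize by auto
  ultimately have "card ?X = (\<Sum>\<sigma>\<in>?T. card {w \<in> ?X. standardize n w = \<sigma>})"
    using sum.group[of ?X ?T "standardize n" "\<lambda>_. 1 :: nat"] by simp
  also have "\<dots> = (\<Sum>\<sigma>\<in>?T. card {w \<in> words n B. standardize n w = \<sigma>})"
    by (intro sum.cong refl arg_cong[where f = card]) (auto simp: word_descents_standardize)
  finally show ?thesis .
qed

lemma sum_shuffleQ_as_count:
  assumes n: "n \<ge> 1" and perms: "\<forall>\<sigma>\<in>T. \<sigma> permutes {1..n}"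
  shows "(\<Sum>\<sigma>\<in>T. shuffleQ B n \<sigma>) = real (\<Sum>\<sigma>\<in>T. card {w \<in> words n B. standardize n w = \<sigma>}) / real B ^ n"
  unfolding of_nat_sum sum_divide_distrib shuffleQ_def
  using card_standardize_fiber[OF _ n] perms by (intro sum.cong refl) simp

theorem theorem1p1:
  fixes n b r j :: nat
  assumes "n \<ge> 2" and "b \<ge> 2" and "j \<le> n - 1"
  shows "carriesPpow b n r 0 j =
    (\<Sum>\<sigma>\<in>{\<sigma>. \<sigma> permutes {1..n} \<and> descents n \<sigma> = j}. shuffleQ (b ^ r) n \<sigma>)"
proof -
  define B where "B = b ^ r"
  have b: "b > 0" and n: "n \<ge> 1" and B: "B > 0"
    using assms by (auto simp: B_def)
  have "carriesPpow b n r 0 j = real (quot_count B n j) / real B ^ n"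
    unfolding B_def by (rule carriesPpow_quot_count[OF b n])
  also have "quot_count B n j
      = (\<Sum>\<sigma>\<in>{\<sigma>. \<sigma> permutes {1..n} \<and> descents n \<sigma> = j}. card {w \<in> words n B. standardize n w = \<sigma>})"
    unfolding card_word_descents[OF B, symmetric] by (rule card_descents_by_standardization)
  also have "real \<dots> / real B ^ n = (\<Sum>\<sigma>\<in>{\<sigma>. \<sigma> permutes {1..n} \<and> descents n \<sigma> = j}. shuffleQ B n \<sigma>)"
    by (rule sum_shuffleQ_as_count[OF n, symmetric]) simp
  finally show ?thesis
    by (simp add: B_def)
qed

end
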